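(* Let $R$ be a commutative multiplicative hyperring with identity, let $\alpha$ be a good endomorphism of $R$, let $I$ be an $\alpha$-prime hyperideal of $R$, and let $S$ be a subset of $R$. Then $(I:S)$ is an $\alpha$-prime hyperideal of $R$.
   Context: A multiplicative hyperring is an abelian group $(R,+)$ with a hyperoperation $\circ:R\times R\to \mathcal P^*(R)$ (nonempty subsets) such that $a\circ(b\circ c)=(a\circ b)\circ c$, $a\circ(b+c)\subseteq a\circ b+a\circ c$, $(b+c)\circ a\subseteq b\circ a+c\circ a$, and $a\circ(-b)=(-a)\circ b=-(a\circ b)$. Products of subsets are unions of elementwise products. Commutative means $a\circ b=b\circ a$. An identity $1$ satisfies $a\in1\circ a$ for all $a$. A hyperideal is a nonempty $I\subseteq R$ closed under subtraction with $r\circ x\subseteq I$ for $r\in R$, $x\in I$. Standing assumption: every hyperideal is a $\mathbf C$-hyperideal, i.e. for every finite product $A=r_1\circ\cdots\circ r_n$, $A\cap I\ne\emptyset$ implies $A\subseteq I$. $(I:S)=\{r\in R: r\circ s\subseteq I \text{ for all } s\in S\}$. A good endomorphism $\alpha$ satisfies $\alpha(x+y)=\alpha(x)+\alpha(y)$ and $\alpha(x\circ y)=\alpha(x)\circ\alpha(y)$. A hyperideal $I$ is $\alpha$-prime if for all $x,y$, $x\circ y\subseteq I$ implies $x\in I$ or $\alpha(y)\in I$; properness is not part of this definition. *)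

theory Defs
  imports Main
begin

text \<open>The additive abelian group (R,+) is the whole type 'a (class ab_group_add);
  the hyperoperation is m :: 'a => 'a => 'a set.\<close>

definition setplus :: "'a::plus set \<Rightarrow> 'a set \<Rightarrow> 'a set" where
  "setplus A B = {a + b | a b. a \<in> A \<and> b \<in> B}"

definition setmult :: "('a \<Rightarrow> 'a \<Rightarrow> 'a set) \<Rightarrow> 'a set \<Rightarrow> 'a set \<Rightarrow> 'a set" where
  "setmult m A B = (\<Union>a\<in>A. \<Union>b\<in>B. m a b)"

definition mult_hyperring :: "('a::ab_group_add \<Rightarrow> 'a \<Rightarrow> 'a set) \<Rightarrow> bool" where
  "mult_hyperring m \<longleftrightarrow>
     (\<forall>a b. m a b \<noteq> {}) \<and>
     (\<forall>a b c. setmult m {a} (m b c) = setmult m (m a b) {c}) \<and>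
     (\<forall>a b c. m a (b + c) \<subseteq> setplus (m a b) (m a c)) \<and>
     (\<forall>a b c. m (b + c) a \<subseteq> setplus (m b a) (m c a)) \<and>
     (\<forall>a b. m a (- b) = uminus ` (m a b) \<and> m (- a) b = uminus ` (m a b))"

definition hcommutative :: "('a \<Rightarrow> 'a \<Rightarrow> 'a set) \<Rightarrow> bool" where
  "hcommutative m \<longleftrightarrow> (\<forall>a b. m a b = m b a)"

definition has_identity :: "('a \<Rightarrow> 'a \<Rightarrow> 'a set) \<Rightarrow> bool" where
  "has_identity m \<longleftrightarrow> (\<exists>e. \<forall>a. a \<in> m e a)"

fun hprod :: "('a \<Rightarrow> 'a \<Rightarrow> 'a set) \<Rightarrow> 'a list \<Rightarrow> 'a set" where
  "hprod m [] = {}"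
| "hprod m [r] = {r}"
| "hprod m (r # rs) = setmult m {r} (hprod m rs)"

definition hyperideal :: "('a::ab_group_add \<Rightarrow> 'a \<Rightarrow> 'a set) \<Rightarrow> 'a set \<Rightarrow> bool" where
  "hyperideal m I \<longleftrightarrow> I \<noteq> {} \<and> (\<forall>x\<in>I. \<forall>y\<in>I. x - y \<in> I) \<and>
     (\<forall>r x. x \<in> I \<longrightarrow> m r x \<subseteq> I)"

definition C_hyperideal :: "('a::ab_group_add \<Rightarrow> 'a \<Rightarrow> 'a set) \<Rightarrow> 'a set \<Rightarrow> bool" where
  "C_hyperideal m I \<longleftrightarrow> hyperideal m I \<and>
     (\<forall>rs. rs \<noteq> [] \<longrightarrow> hprod m rs \<inter> I \<noteq> {} \<longrightarrow> hprod m rs \<subseteq> I)"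

definition colon :: "('a \<Rightarrow> 'a \<Rightarrow> 'a set) \<Rightarrow> 'a set \<Rightarrow> 'a set \<Rightarrow> 'a set" where
  "colon m I S = {r. \<forall>s\<in>S. m r s \<subseteq> I}"

definition good_endo :: "('a::ab_group_add \<Rightarrow> 'a \<Rightarrow> 'a set) \<Rightarrow> ('a \<Rightarrow> 'a) \<Rightarrow> bool" where
  "good_endo m \<alpha> \<longleftrightarrow> (\<forall>x y. \<alpha> (x + y) = \<alpha> x + \<alpha> y) \<and>
     (\<forall>x y. \<alpha> ` (m x y) = m (\<alpha> x) (\<alpha> y))"

definition alpha_prime :: "('a::ab_group_add \<Rightarrow> 'a \<Rightarrow> 'a set) \<Rightarrow> ('a \<Rightarrow> 'a) \<Rightarrow> 'a set \<Rightarrow> bool" where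
  "alpha_prime m \<alpha> I \<longleftrightarrow> hyperideal m I \<and>
     (\<forall>x y. m x y \<subseteq> I \<longrightarrow> x \<in> I \<or> \<alpha> y \<in> I)"

end

theory Submission
  imports Defs
begin

text \<open>If x o y is contained in (I:S) but x is not in (I:S), pick s in S and z in x o s
  outside I. Associativity and commutativity give z o y \<subseteq> (x o y) o s \<subseteq> I, so
  \<alpha> y \<in> I \<subseteq> (I:S) by the \<alpha>-primeness of I.\<close>

lemma mem_setmult_iff: "z \<in> setmult m A B \<longleftrightarrow> (\<exists>a\<in>A. \<exists>b\<in>B. z \<in> m a b)"
  unfolding setmult_def by blast

lemma mult_hyperring_assoc:
  assumes "mult_hyperring m"
  shows "setmult m {a} (m b c) = setmult m (m a b) {c}"
  using assms unfolding mult_hyperring_def by auto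

lemma mult_hyperring_comm_swap_right:
  assumes "mult_hyperring m" and "hcommutative m"
  shows "setmult m (m a b) {c} = setmult m (m a c) {b}"
proof -
  have comm: "m u v = m v u" for u v
    using assms(2) unfolding hcommutative_def by blast
  have "setmult m (m a b) {c} = setmult m {a} (m b c)"
    using mult_hyperring_assoc[OF assms(1)] by simp
  also have "\<dots> = setmult m {a} (m c b)"
    by (simp add: comm)
  also have "\<dots> = setmult m (m a c) {b}"
    using mult_hyperring_assoc[OF assms(1)] by simp
  finally show ?thesis .
qed

lemma mult_hyperring_diff_left:
  assumes "mult_hyperring m" and "w \<in> m (x - y) s"
  obtains a c where "a \<in> m x s" and "c \<in> m y s" and "w = a - c"
proof -
  have distrib: "m (b + c) a \<subseteq> setplus (m b a) (m c a)"
    and neg: "m (- b) a = uminus ` m b a" for a b c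
    using assms(1) unfolding mult_hyperring_def by auto
  from assms(2) distrib[of x "- y" s] neg[of y s]
  have "w \<in> setplus (m x s) (uminus ` m y s)"
    by auto
  then obtain a c where "a \<in> m x s" and "c \<in> m y s" and "w = a + - c"
    unfolding setplus_def by auto
  with that show ?thesis
    by simp
qed

lemma hyperideal_subset_colon:
  assumes "hcommutative m" and "hyperideal m I"
  shows "I \<subseteq> colon m I S"
proof
  fix x assume "x \<in> I"
  then have "m s x \<subseteq> I" for s
    using assms(2) unfolding hyperideal_def by blast
  then show "x \<in> colon m I S"
    using assms(1) unfolding hcommutative_def colon_def by simp
qed

lemma hyperideal_colon:
  assumes ring: "mult_hyperring m" and comm: "hcommutative m" and I: "hyperideal m I"
  shows "hyperideal m (colon m I S)"
  unfolding hyperideal_def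
proof (intro conjI allI ballI impI)
  show "colon m I S \<noteq> {}"
    using hyperideal_subset_colon[OF comm I] I unfolding hyperideal_def by blast
next
  fix x y assume x: "x \<in> colon m I S" and y: "y \<in> colon m I S"
  show "x - y \<in> colon m I S" unfolding colon_def
  proof (intro CollectI ballI subsetI)
    fix s w assume s: "s \<in> S" and w: "w \<in> m (x - y) s"
    then obtain a c where "a \<in> m x s" "c \<in> m y s" "w = a - c"
      using mult_hyperring_diff_left[OF ring] by metis
    with x y s I show "w \<in> I"
      unfolding colon_def hyperideal_def by blast
  qed
next
  fix r x assume x: "x \<in> colon m I S"
  show "m r x \<subseteq> colon m I S" unfolding colon_def
  proof (intro subsetI CollectI ballI)
    fix z s w assume "z \<in> m r x" and s: "s \<in> S" and "w \<in> m z s"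
    then have "w \<in> setmult m (m r x) {s}"
      by (auto simp: mem_setmult_iff)
    then have "w \<in> setmult m {r} (m x s)"
      by (simp add: mult_hyperring_assoc[OF ring])
    then obtain b where "b \<in> m x s" and "w \<in> m r b"
      by (auto simp: mem_setmult_iff)
    with x s I show "w \<in> I"
      unfolding colon_def hyperideal_def by blast
  qed
qed

lemma alpha_prime_colon:
  assumes ring: "mult_hyperring m" and comm: "hcommutative m"
    and prime: "alpha_prime m \<alpha> I"
  shows "alpha_prime m \<alpha> (colon m I S)"
proof -
  have I: "hyperideal m I"
    using prime unfolding alpha_prime_def by blast
  have "\<alpha> y \<in> colon m I S"
    if xy: "m x y \<subseteq> colon m I S" and x: "x \<notin> colon m I S" for x y
  proof -
    obtain s z where s: "s \<in> S" and z: "z \<in> m x s" and "z \<notin> I"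
      using x unfolding colon_def by blast
    have "m z y \<subseteq> I"
    proof
      fix w assume "w \<in> m z y"
      with z have "w \<in> setmult m (m x s) {y}"
        by (auto simp: mem_setmult_iff)
      then have "w \<in> setmult m (m x y) {s}"
        by (simp add: mult_hyperring_comm_swap_right[OF ring comm])
      then obtain u where "u \<in> m x y" and "w \<in> m u s"
        by (auto simp: mem_setmult_iff)
      with xy s show "w \<in> I"
        unfolding colon_def by blast
    qed
    with \<open>z \<notin> I\<close> prime have "\<alpha> y \<in> I"
      unfolding alpha_prime_def by blast
    then show ?thesis
      using hyperideal_subset_colon[OF comm I] by blast
  qed
  then show ?thesis
    using hyperideal_colon[OF ring comm I] unfolding alpha_prime_def by blast
qed

theorem mainTheorem7:
  fixes m :: "'a::ab_group_add \<Rightarrow> 'a \<Rightarrow> 'a set"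
    and \<alpha> :: "'a \<Rightarrow> 'a" and I S :: "'a set"
  assumes "mult_hyperring m" and "hcommutative m" and "has_identity m"
    and "\<forall>J. hyperideal m J \<longrightarrow> C_hyperideal m J"
    and "good_endo m \<alpha>"
    and "alpha_prime m \<alpha> I"
  shows "alpha_prime m \<alpha> (colon m I S)"
  using alpha_prime_colon[OF assms(1,2,6)] .

end
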